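(* Let $\alpha>0$, $\beta\ge0$, $\lambda\in[0,1]$, $p=2\alpha\lambda$, and $z\notin\operatorname{argmin}\phi$. For every $\tau\in(0,\tau_2)\cap(0,T^\lambda(z))$, $$\int_\tau^{T^\lambda(z)}\frac{\alpha(1-\lambda)}{t^{p+1}}\,dt+\int_\tau^{T^\lambda(z)}\frac{\beta\mu}{t^{p}}\,dt\le\frac{(\alpha+1)^2H(\tau)^2}{2\mu\,\tau^{p+2}\,\big(2H(\tau)-1\big)^2}.$$
   Context: Let $\phi:\mathbb{R}^n\to\mathbb{R}$ be twice continuously differentiable, $\mu$-strongly convex ($\mu>0$), with $L$-Lipschitz gradient and minimum value $\phi^*$. For $z\in\mathbb{R}^n$, $x_z$ is the unique $C^1([0,\infty))\cap C^2((0,\infty))$ solution of $\ddot x(t)+\frac{\alpha}{t}\dot x(t)+\beta\nabla^2\phi(x(t))\dot x(t)+\nabla\phi(x(t))=0$ ($t>0$), $x(0)=z$, $\dot x(0)=0$. For $\lambda\in[0,1]$: $\varphi_{z,\lambda}(t)=\frac12\frac{d}{dt}\|\dot x_z(t)\|^2+\lambda\frac{\alpha}{t}\|\dot x_z(t)\|^2$ and $T^\lambda(z)=\inf\{t>0:\varphi_{z,\lambda}(t)\le0\}$. $H(t)=1-\frac{\beta Lt}{\alpha+2}-\frac{Lt^2}{2(\alpha+3)}$ and $\tau_2=-\frac{\alpha+3}{\alpha+2}\beta+\sqrt{\left(\frac{\alpha+3}{\alpha+2}\right)^2\beta^2+\frac{\alpha+3}{L}}$ (so $H(\tau_2)=\frac12$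 and $H>\frac12$ on $[0,\tau_2)$). *)

theory Defs
  imports "HOL-Analysis.Analysis"
begin

definition strongly_convex :: "real \<Rightarrow> ('a::real_inner \<Rightarrow> real) \<Rightarrow> bool" where
  "strongly_convex \<mu> \<phi> \<longleftrightarrow> convex_on UNIV (\<lambda>x. \<phi> x - (\<mu> / 2) * (norm x)^2)"

definition H_fun :: "real \<Rightarrow> real \<Rightarrow> real \<Rightarrow> real \<Rightarrow> real" where
  "H_fun \<alpha> \<beta> L t = 1 - \<beta> * L * t / (\<alpha> + 2) - L * t^2 / (2 * (\<alpha> + 3))"

definition tau2 :: "real \<Rightarrow> real \<Rightarrow> real \<Rightarrow> real" where
  "tau2 \<alpha> \<beta> L = - ((\<alpha> + 3) / (\<alpha> + 2)) * \<beta>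
      + sqrt (((\<alpha> + 3) / (\<alpha> + 2))^2 * \<beta>^2 + (\<alpha> + 3) / L)"

definition varphi :: "real \<Rightarrow> real \<Rightarrow> (real \<Rightarrow> 'a::real_normed_vector) \<Rightarrow> real \<Rightarrow> real" where
  "varphi \<alpha> lam x' t = deriv (\<lambda>s. (norm (x' s))^2) t / 2 + lam * \<alpha> / t * (norm (x' t))^2"

text \<open>T^lambda(z) = inf {t>0. varphi(t) <= 0}, as an extended real (infinite if the set is empty).\<close>
definition T_lam :: "real \<Rightarrow> real \<Rightarrow> (real \<Rightarrow> 'a::real_normed_vector) \<Rightarrow> ereal" where
  "T_lam \<alpha> lam x' = Inf (ereal ` {t. t > 0 \<and> varphi \<alpha> lam x' t \<le> 0})"

end

theory Submission
  imports Defs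
begin

text \<open>
  Before \<open>T_lam\<close>, two quantities are monotone along the trajectory: \<open>t powr p * (norm (x' t))\<^sup>2\<close>
  with \<open>p = 2 * \<alpha> * lam\<close> has derivative \<open>2 * t powr p * varphi t \<ge> 0\<close>, and, by the equation and
  the Hessian bound \<open>\<mu>\<close> from strong convexity, \<open>\<phi> (x t)\<close> decreases at rate at least
  \<open>((1 - lam) * \<alpha> / t + \<beta> * \<mu>) * (norm (x' t))\<^sup>2\<close>. Integrating from \<open>\<tau>\<close> bounds
  \<open>\<tau> powr p * (norm (x' \<tau>))\<^sup>2\<close> times the integrals by \<open>\<phi> z - inf \<phi> \<le> (norm (g z))\<^sup>2 / (2 * \<mu>)\<close>.
  The lower bound for \<open>norm (x' \<tau>)\<close> compares \<open>x'\<close> with \<open>- t / (\<alpha> + 1) *\<^sub>R g z\<close>, the velocity of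
  the equation with the gradient frozen at \<open>z\<close> and no Hessian term; the error is controlled
  through the Lipschitz constant \<open>L\<close>, which is where \<open>H\<close> comes from.
\<close>

section \<open>Directional derivatives, strong convexity and Lipschitz gradients\<close>

lemma has_derivative_directional_at_right:
  fixes f :: "'a::real_normed_vector \<Rightarrow> 'b::real_normed_vector"
  assumes "(f has_derivative f') (at a)"
  shows "((\<lambda>t. (f (a + t *\<^sub>R d) - f a) /\<^sub>R t) \<longlongrightarrow> f' d) (at_right 0)"
proof -
  have "((\<lambda>t. a + t *\<^sub>R d) has_derivative (\<lambda>t. t *\<^sub>R d)) (at 0 within {0<..})"
    by (auto intro!: derivative_eq_intros)
  then have "((\<lambda>t. f (a + t *\<^sub>R d)) has_derivative (\<lambda>t. f' (t *\<^sub>R d))) (at 0 within {0<..})"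
    by (rule has_derivative_compose) (use assms in simp)
  then have "((\<lambda>t. (f (a + t *\<^sub>R d) - f a - f' (t *\<^sub>R d)) /\<^sub>R \<bar>t\<bar> + f' d) \<longlongrightarrow> 0 + f' d) (at_right 0)"
    unfolding has_derivative_at_within by (intro tendsto_add) auto
  moreover have "\<forall>\<^sub>F t in at_right 0.
      (f (a + t *\<^sub>R d) - f a - f' (t *\<^sub>R d)) /\<^sub>R \<bar>t\<bar> + f' d = (f (a + t *\<^sub>R d) - f a) /\<^sub>R t"
    using eventually_at_right_less[of 0]
    by eventually_elim
       (simp add: linear_cmul[OF has_derivative_linear[OF assms]] algebra_simps)
  ultimately show ?thesis
    by (auto intro: Lim_transform_eventually)
qed

lemma strongly_convex_above_tangent:
  fixes \<phi> :: "'a::real_inner \<Rightarrow> real"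
  assumes grad: "\<And>y. (\<phi> has_derivative (\<lambda>h. g y \<bullet> h)) (at y)"
    and sconv: "strongly_convex \<mu> \<phi>"
  shows "\<phi> a + g a \<bullet> (b - a) + \<mu> / 2 * (norm (b - a))^2 \<le> \<phi> b"
proof -
  define \<psi> where "\<psi> y = \<phi> y - \<mu> / 2 * (norm y)^2" for y
  have "(\<psi> has_derivative (\<lambda>h. g a \<bullet> h - \<mu> * (a \<bullet> h))) (at a)"
    unfolding \<psi>_def power2_norm_eq_inner
    by (auto intro!: derivative_eq_intros grad simp: inner_commute)
  from has_derivative_directional_at_right[OF this]
  have "((\<lambda>t. (\<psi> (a + t *\<^sub>R (b - a)) - \<psi> a) /\<^sub>R t)
      \<longlongrightarrow> g a \<bullet> (b - a) - \<mu> * (a \<bullet> (b - a))) (at_right 0)" .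
  moreover have "\<forall>\<^sub>F t in at_right 0. (\<psi> (a + t *\<^sub>R (b - a)) - \<psi> a) /\<^sub>R t \<le> \<psi> b - \<psi> a"
    unfolding eventually_at_right_field
  proof (intro exI[of _ 1] conjI allI impI, simp)
    fix t :: real assume t: "0 < t" "t < 1"
    have "\<psi> ((1 - t) *\<^sub>R a + t *\<^sub>R b) \<le> (1 - t) * \<psi> a + t * \<psi> b"
      using sconv t unfolding strongly_convex_def \<psi>_def by (intro convex_onD) auto
    moreover have "(1 - t) *\<^sub>R a + t *\<^sub>R b = a + t *\<^sub>R (b - a)" by (simp add: algebra_simps)
    ultimately show "(\<psi> (a + t *\<^sub>R (b - a)) - \<psi> a) /\<^sub>R t \<le> \<psi> b - \<psi> a"
      using t by (simp add: field_simps)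
  qed
  ultimately have "g a \<bullet> (b - a) - \<mu> * (a \<bullet> (b - a)) \<le> \<psi> b - \<psi> a"
    by (rule tendsto_upperbound) simp
  then show ?thesis
    unfolding \<psi>_def power2_norm_eq_inner
    by (simp add: inner_commute algebra_simps)
qed

lemma strongly_convex_gradient_monotone:
  fixes \<phi> :: "'a::real_inner \<Rightarrow> real"
  assumes grad: "\<And>y. (\<phi> has_derivative (\<lambda>h. g y \<bullet> h)) (at y)"
    and sconv: "strongly_convex \<mu> \<phi>"
  shows "\<mu> * (norm (b - a))^2 \<le> (g b - g a) \<bullet> (b - a)"
  using strongly_convex_above_tangent[OF grad sconv, of a b]
    strongly_convex_above_tangent[OF grad sconv, of b a]
  by (simp add: norm_minus_commute inner_diff_left inner_diff_right)

lemma strongly_convex_derivative_coercive: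
  fixes \<phi> :: "'a::real_inner \<Rightarrow> real"
  assumes grad: "\<And>y. (\<phi> has_derivative (\<lambda>h. g y \<bullet> h)) (at y)"
    and sconv: "strongly_convex \<mu> \<phi>"
    and hess: "(g has_derivative g') (at y)"
  shows "\<mu> * (norm v)^2 \<le> g' v \<bullet> v"
proof -
  have "((\<lambda>t. ((g (y + t *\<^sub>R v) - g y) /\<^sub>R t) \<bullet> v) \<longlongrightarrow> g' v \<bullet> v) (at_right 0)"
    by (intro tendsto_inner has_derivative_directional_at_right[OF hess] tendsto_const)
  moreover have "\<forall>\<^sub>F t in at_right 0. \<mu> * (norm v)^2 \<le> ((g (y + t *\<^sub>R v) - g y) /\<^sub>R t) \<bullet> v"
    using eventually_at_right_less[of "0::real"]
  proof eventually_elim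
    case (elim t)
    have "\<mu> * (t * norm v)^2 \<le> t * ((g (y + t *\<^sub>R v) - g y) \<bullet> v)"
      using strongly_convex_gradient_monotone[OF grad sconv, of y "y + t *\<^sub>R v"] elim
      by (simp add: algebra_simps)
    with elim show ?case
      by (simp add: power2_eq_square mult_ac) (simp add: field_simps)
  qed
  ultimately show ?thesis by (rule tendsto_lowerbound) simp
qed

lemma lipschitz_derivative_norm_le:
  fixes g :: "'a::real_normed_vector \<Rightarrow> 'b::real_normed_vector"
  assumes lip: "L-lipschitz_on UNIV g"
    and deriv: "(g has_derivative g') (at y)"
  shows "norm (g' v) \<le> L * norm v"
proof -
  have "((\<lambda>t. norm ((g (y + t *\<^sub>R v) - g y) /\<^sub>R t)) \<longlongrightarrow> norm (g' v)) (at_right 0)"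
    by (intro tendsto_norm has_derivative_directional_at_right[OF deriv])
  moreover have "\<forall>\<^sub>F t in at_right 0. norm ((g (y + t *\<^sub>R v) - g y) /\<^sub>R t) \<le> L * norm v"
    using eventually_at_right_less[of "0::real"]
  proof eventually_elim
    case (elim t)
    have "norm (g (y + t *\<^sub>R v) - g y) \<le> L * (t * norm v)"
      using lipschitz_onD[OF lip, of "y + t *\<^sub>R v" y] elim by (simp add: dist_norm)
    with elim show ?case
      by simp (simp add: field_simps)
  qed
  ultimately show ?thesis by (rule tendsto_upperbound) simp
qed

lemma strongly_convex_suboptimality_le:
  fixes \<phi> :: "'a::real_inner \<Rightarrow> real"
  assumes grad: "\<And>y. (\<phi> has_derivative (\<lambda>h. g y \<bullet> h)) (at y)"
    and sconv: "strongly_convex \<mu> \<phi>" and mu_pos: "\<mu> > 0"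
  shows "\<phi> a - \<phi> b \<le> (norm (g a))^2 / (2 * \<mu>)"
proof -
  define G d where "G = norm (g a)" and "d = norm (b - a)"
  have "- (g a \<bullet> (b - a)) \<le> G * d"
    using norm_cauchy_schwarz[of "- g a" "b - a"] unfolding G_def d_def by simp
  moreover have "G * d - \<mu> / 2 * d^2 = G^2 / (2 * \<mu>) - (G - \<mu> * d)^2 / (2 * \<mu>)"
    using mu_pos by (simp add: field_simps power2_eq_square)
  moreover have "0 \<le> (G - \<mu> * d)^2 / (2 * \<mu>)"
    using mu_pos by simp
  ultimately show ?thesis
    using strongly_convex_above_tangent[OF grad sconv, of a b] unfolding G_def d_def by linarith
qed

lemma strongly_convex_gradient_nonzero:
  fixes \<phi> :: "'a::real_inner \<Rightarrow> real"
  assumes grad: "\<And>y. (\<phi> has_derivative (\<lambda>h. g y \<bullet> h)) (at y)"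
    and sconv: "strongly_convex \<mu> \<phi>" and mu_pos: "\<mu> > 0" and "\<phi> b < \<phi> a"
  shows "g a \<noteq> 0"
  using strongly_convex_suboptimality_le[OF grad sconv mu_pos, of a b] assms(4) by auto

section \<open>The threshold function \<open>H\<close>\<close>

lemma H_fun_antimono:
  assumes "\<beta> \<ge> 0" "L \<ge> 0" "\<alpha> > 0" "0 \<le> s" "s \<le> t"
  shows "H_fun \<alpha> \<beta> L t \<le> H_fun \<alpha> \<beta> L s"
proof -
  have "\<beta> * L * s / (\<alpha> + 2) \<le> \<beta> * L * t / (\<alpha> + 2)"
    using assms by (intro divide_right_mono mult_left_mono) auto
  moreover have "L * s^2 / (2 * (\<alpha> + 3)) \<le> L * t^2 / (2 * (\<alpha> + 3))"
    using assms by (intro divide_right_mono mult_left_mono power_mono) auto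
  ultimately show ?thesis
    unfolding H_fun_def by simp
qed

lemma H_fun_le_one:
  assumes "\<beta> \<ge> 0" "L \<ge> 0" "\<alpha> > 0" "0 \<le> s"
  shows "H_fun \<alpha> \<beta> L s \<le> 1"
proof -
  have "0 \<le> \<beta> * L * s / (\<alpha> + 2)" "0 \<le> L * s^2 / (2 * (\<alpha> + 3))"
    using assms by auto
  then show ?thesis
    unfolding H_fun_def by linarith
qed

lemma H_fun_gt_half:
  assumes "\<beta> \<ge> 0" "L \<ge> 0" "\<alpha> > 0" "0 \<le> \<tau>" "\<tau> < tau2 \<alpha> \<beta> L"
  shows "H_fun \<alpha> \<beta> L \<tau> > 1/2"
proof (cases "L = 0")
  case False
  define a where "a = (\<alpha> + 3) / (\<alpha> + 2)"
  have "0 \<le> \<tau> + a * \<beta>"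
    using assms unfolding a_def by simp
  moreover have "\<tau> + a * \<beta> < sqrt (a^2 * \<beta>^2 + (\<alpha> + 3) / L)"
    using assms unfolding tau2_def a_def by simp
  ultimately have "(\<tau> + a * \<beta>)^2 < (sqrt (a^2 * \<beta>^2 + (\<alpha> + 3) / L))^2"
    by (intro power_strict_mono) auto
  also have "\<dots> = a^2 * \<beta>^2 + (\<alpha> + 3) / L"
    using assms by simp
  finally have "(\<tau> + a * \<beta>)^2 < a^2 * \<beta>^2 + (\<alpha> + 3) / L" .
  then have "L * \<tau>^2 + 2 * a * \<beta> * L * \<tau> < \<alpha> + 3"
    using assms False by (simp add: power2_eq_square field_simps)
  moreover have "2 * (\<alpha> + 3) * (1 - H_fun \<alpha> \<beta> L \<tau>) = L * \<tau>^2 + 2 * a * \<beta> * L * \<tau>"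
    using assms unfolding H_fun_def a_def by (simp add: right_diff_distrib distrib_left)
  ultimately have "(\<alpha> + 3) * (2 * (1 - H_fun \<alpha> \<beta> L \<tau>)) < (\<alpha> + 3) * 1"
    by (metis mult.assoc mult.commute mult_1_right)
  then show ?thesis
    using assms by (subst (asm) mult_less_cancel_left_pos) auto
qed (simp add: H_fun_def)

section \<open>Nonnegative integrals up to an extended real endpoint\<close>

lemma set_nn_integral_le_of_interval_integrals_le:
  fixes h :: "real \<Rightarrow> real" and T :: ereal
  assumes tT: "ereal \<tau> < T" and meas: "h \<in> borel_measurable borel"
    and cont: "continuous_on {\<tau>..} h" and nonneg: "\<And>t. \<tau> \<le> t \<Longrightarrow> 0 \<le> h t"
    and bound: "\<And>t. \<tau> \<le> t \<Longrightarrow> ereal t < T \<Longrightarrow> integral {\<tau>..t} h \<le> C"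
  shows "(\<integral>\<^sup>+ t \<in> {t. \<tau> \<le> t \<and> ereal t < T}. ennreal (h t) \<partial>lborel) \<le> ennreal C"
proof -
  obtain X :: "nat \<Rightarrow> real" where X: "incseq X" "\<And>i. \<tau> < X i" "\<And>i. ereal (X i) < T"
    and lim: "(\<lambda>i. ereal (X i)) \<longlonglongrightarrow> T"
    using ereal_incseq_approx[OF tT] by auto
  have union: "{t. \<tau> \<le> t \<and> ereal t < T} = (\<Union>i. {\<tau>..X i})"
  proof (intro equalityI subsetI)
    fix t assume "t \<in> {t. \<tau> \<le> t \<and> ereal t < T}"
    then have "\<tau> \<le> t" "\<forall>\<^sub>F i in sequentially. ereal t < ereal (X i)"
      using order_tendstoD(1)[OF lim, of "ereal t"] by auto
    then show "t \<in> (\<Union>i. {\<tau>..X i})"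
      by (auto simp: eventually_sequentially intro: less_imp_le)
  next
    fix t assume "t \<in> (\<Union>i. {\<tau>..X i})"
    then obtain i where "\<tau> \<le> t" "t \<le> X i" by auto
    then show "t \<in> {t. \<tau> \<le> t \<and> ereal t < T}"
      using le_less_trans[OF _ X(3)[of i], of "ereal t"] by simp
  qed
  let ?M = "density lborel (\<lambda>t. ennreal (h t))"
  have "(\<integral>\<^sup>+ t \<in> {t. \<tau> \<le> t \<and> ereal t < T}. ennreal (h t) \<partial>lborel) = emeasure ?M (\<Union>i. {\<tau>..X i})"
    unfolding union using meas by (simp add: emeasure_density)
  also have "\<dots> = (SUP i. emeasure ?M {\<tau>..X i})"
    using X(1) by (intro SUP_emeasure_incseq[symmetric]) (auto simp: incseq_def)
  also have "\<dots> \<le> ennreal C"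
  proof (rule SUP_least)
    fix i
    have "(h has_integral integral {\<tau>..X i} h) {\<tau>..X i}"
      using cont by (intro integrable_integral integrable_continuous_interval)
        (auto elim: continuous_on_subset)
    then have "emeasure ?M {\<tau>..X i} = ennreal (integral {\<tau>..X i} h)"
      using meas nonneg by (subst emeasure_density) (auto intro: nn_integral_has_integral_lebesgue')
    also have "\<dots> \<le> ennreal C"
      using bound X(2,3) by (intro ennreal_leI) (simp add: less_imp_le)
    finally show "emeasure ?M {\<tau>..X i} \<le> ennreal C" .
  qed
  finally show ?thesis .
qed

section \<open>The Hessian-damped inertial system\<close>

lemma varphi_pos_below_T_lam:
  assumes "0 < t" "ereal t < T_lam \<alpha> lam x'"
  shows "varphi \<alpha> lam x' t > 0"
proof (rule ccontr)
  assume "\<not> varphi \<alpha> lam x' t > 0"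
  with assms(1) have "T_lam \<alpha> lam x' \<le> ereal t"
    unfolding T_lam_def by (intro Inf_lower) auto
  with assms(2) show False by simp
qed

locale hessian_damped_flow =
  fixes g :: "'a::{real_inner,banach} \<Rightarrow> 'a" and Hs :: "'a \<Rightarrow> 'a \<Rightarrow>\<^sub>L 'a"
    and x x' x'' :: "real \<Rightarrow> 'a" and \<alpha> \<beta> L :: real
  assumes alpha_pos: "\<alpha> > 0" and beta_nonneg: "\<beta> \<ge> 0"
    and lipschitz: "L-lipschitz_on UNIV g"
    and hessian: "\<And>y. (g has_derivative blinfun_apply (Hs y)) (at y)"
    and hessian_cont: "continuous_on UNIV Hs"
    and x_deriv: "\<And>t. t \<ge> 0 \<Longrightarrow> (x has_vector_derivative x' t) (at t within {0..})"
    and x'_cont: "continuous_on {0..} x'"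
    and x'_deriv: "\<And>t. t > 0 \<Longrightarrow> (x' has_vector_derivative x'' t) (at t)"
    and ode: "\<And>t. t > 0 \<Longrightarrow>
      x'' t + (\<alpha> / t) *\<^sub>R x' t + \<beta> *\<^sub>R blinfun_apply (Hs (x t)) (x' t) + g (x t) = 0"
    and starts_at_rest: "x' 0 = 0"
begin

lemma lipschitz_const_nonneg: "L \<ge> 0"
  using lipschitz by (rule lipschitz_on_nonneg)

lemma hessian_norm_le: "norm (blinfun_apply (Hs y) v) \<le> L * norm v"
  by (rule lipschitz_derivative_norm_le[OF lipschitz hessian])

lemma acceleration_eq:
  "t > 0 \<Longrightarrow> x'' t = - ((\<alpha> / t) *\<^sub>R x' t) - \<beta> *\<^sub>R blinfun_apply (Hs (x t)) (x' t) - g (x t)"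
  using ode[of t] by (simp add: algebra_simps eq_neg_iff_add_eq_0)

definition forcing :: "real \<Rightarrow> 'a" where
  "forcing s = \<beta> *\<^sub>R blinfun_apply (Hs (x s)) (x' s) + g (x s) - g (x 0)"

lemma forcing_continuous: "continuous_on {0..} forcing"
proof -
  have x: "continuous_on {0..} x"
    by (rule continuous_on_vector_derivative) (use x_deriv in auto)
  have "continuous_on {0..} (\<lambda>s. Hs (x s))" "continuous_on {0..} (\<lambda>s. g (x s))"
    using continuous_on_compose2[OF hessian_cont x]
      continuous_on_compose2[OF lipschitz_on_continuous_on[OF lipschitz] x] by auto
  then show ?thesis
    unfolding forcing_def by (intro continuous_intros x'_cont)
qed

text \<open>Multiplying the equation by \<open>s powr \<alpha>\<close> turns its first two terms into an exact derivative.\<close>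
lemma weighted_forcing_has_integral:
  assumes "t \<ge> 0"
  shows "((\<lambda>s. s powr \<alpha> *\<^sub>R forcing s) has_integral
    - (t powr \<alpha> *\<^sub>R x' t + (t powr (\<alpha> + 1) / (\<alpha> + 1)) *\<^sub>R g (x 0))) {0..t}"
proof -
  define Q where "Q s = s powr \<alpha> *\<^sub>R x' s + (s powr (\<alpha> + 1) / (\<alpha> + 1)) *\<^sub>R g (x 0)" for s
  have "((\<lambda>s. - (s powr \<alpha> *\<^sub>R forcing s)) has_integral (Q t - Q 0)) {0..t}"
  proof (rule fundamental_theorem_of_calculus_interior[OF assms])
    show "continuous_on {0..t} Q"
      unfolding Q_def using alpha_pos
      by (intro continuous_intros continuous_on_powr' continuous_on_subset[OF x'_cont]) auto
  next
    fix s assume "s \<in> {0<..<t}"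
    then have s: "s > 0" by simp
    have "(Q has_vector_derivative (\<alpha> * s powr (\<alpha> - 1)) *\<^sub>R x' s + s powr \<alpha> *\<^sub>R x'' s
        + (((\<alpha> + 1) * s powr (\<alpha> + 1 - 1)) / (\<alpha> + 1)) *\<^sub>R g (x 0)) (at s)"
      unfolding Q_def using s x'_deriv[OF s]
      by (auto intro!: derivative_eq_intros simp: has_real_derivative_iff_has_vector_derivative[symmetric])
    moreover have "(\<alpha> * s powr (\<alpha> - 1)) *\<^sub>R x' s + s powr \<alpha> *\<^sub>R x'' s
        + (((\<alpha> + 1) * s powr (\<alpha> + 1 - 1)) / (\<alpha> + 1)) *\<^sub>R g (x 0) = - (s powr \<alpha> *\<^sub>R forcing s)"
    proof -
      have "((\<alpha> + 1) * s powr (\<alpha> + 1 - 1)) / (\<alpha> + 1) = s powr \<alpha>"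
        using alpha_pos by simp
      moreover have "s powr (\<alpha> - 1) = s powr \<alpha> / s"
        using s by (simp add: powr_diff)
      ultimately show ?thesis
        unfolding acceleration_eq[OF s] forcing_def by (simp add: algebra_simps)
    qed
    ultimately show "(Q has_vector_derivative - (s powr \<alpha> *\<^sub>R forcing s)) (at s)"
      by simp
  qed
  moreover have "Q 0 = 0"
    using alpha_pos starts_at_rest by (simp add: Q_def)
  ultimately have "((\<lambda>s. - (s powr \<alpha> *\<^sub>R forcing s)) has_integral Q t) {0..t}"
    by simp
  from has_integral_neg[OF this] show ?thesis
    by (simp only: minus_minus Q_def)
qed

lemma velocity_deviation_le:
  assumes t: "t > 0" and F: "(F has_integral I) {0..t}"
    and le: "\<And>s. s \<in> {0..t} \<Longrightarrow> s powr \<alpha> * norm (forcing s) \<le> F s"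
  shows "t powr \<alpha> * norm (x' t + (t / (\<alpha> + 1)) *\<^sub>R g (x 0)) \<le> I"
proof -
  have "norm (- (t powr \<alpha> *\<^sub>R x' t + (t powr (\<alpha> + 1) / (\<alpha> + 1)) *\<^sub>R g (x 0))) \<le> I"
    using has_integral_norm_bound_integral_component[OF weighted_forcing_has_integral F, of 1] t le
    by simp
  moreover have "t powr \<alpha> *\<^sub>R x' t + (t powr (\<alpha> + 1) / (\<alpha> + 1)) *\<^sub>R g (x 0)
      = t powr \<alpha> *\<^sub>R (x' t + (t / (\<alpha> + 1)) *\<^sub>R g (x 0))"
    using t by (simp add: powr_add scaleR_add_right)
  ultimately show ?thesis
    using t by (simp only: norm_minus_cancel norm_scaleR) simp
qed

lemma velocity_quotient_bdd_above: "bdd_above ((\<lambda>s. norm (x' s) / s) ` {0<..\<tau>})"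
proof -
  have "compact (forcing ` {0..\<tau>})"
    by (intro compact_continuous_image continuous_on_subset[OF forcing_continuous]) auto
  then obtain W where W: "\<And>s. s \<in> {0..\<tau>} \<Longrightarrow> norm (forcing s) \<le> W"
    unfolding bounded_iff[symmetric] by (metis compact_imp_bounded bounded_iff image_eqI)
  have "norm (x' s) / s \<le> (W + norm (g (x 0))) / (\<alpha> + 1)" if s: "s \<in> {0<..\<tau>}" for s
  proof -
    have "((\<lambda>r. W * r powr \<alpha>) has_integral W * (s powr (\<alpha> + 1) / (\<alpha> + 1))) {0..s}"
      using s alpha_pos by (intro has_integral_mult_right has_integral_powr_from_0) auto
    moreover have "r powr \<alpha> * norm (forcing r) \<le> W * r powr \<alpha>" if "r \<in> {0..s}" for r
    proof -
      have "norm (forcing r) \<le> W"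
        using W that s by auto
      then show ?thesis
        by (metis mult.commute mult_right_mono powr_ge_zero)
    qed
    ultimately have "s powr \<alpha> * norm (x' s + (s / (\<alpha> + 1)) *\<^sub>R g (x 0))
        \<le> W * (s powr (\<alpha> + 1) / (\<alpha> + 1))"
      using s by (intro velocity_deviation_le) auto
    also have "\<dots> = s powr \<alpha> * (W * s / (\<alpha> + 1))"
      using s by (simp add: powr_add)
    finally have "norm (x' s + (s / (\<alpha> + 1)) *\<^sub>R g (x 0)) \<le> W * s / (\<alpha> + 1)"
      by (rule mult_left_le_imp_le) (use s in simp)
    moreover have "norm (x' s) \<le> norm (x' s + (s / (\<alpha> + 1)) *\<^sub>R g (x 0)) + s / (\<alpha> + 1) * norm (g (x 0))"
      using norm_triangle_ineq4[of "x' s + (s / (\<alpha> + 1)) *\<^sub>R g (x 0)" "(s / (\<alpha> + 1)) *\<^sub>R g (x 0)"]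
        s alpha_pos by simp
    ultimately show ?thesis
      using s alpha_pos by (simp add: field_simps)
  qed
  then show ?thesis
    by (intro bdd_aboveI2) auto
qed

lemma displacement_le:
  assumes t: "t \<ge> 0" and B: "\<And>s. s \<in> {0..t} \<Longrightarrow> norm (x' s) \<le> B * s"
  shows "norm (x t - x 0) \<le> B * t^2 / 2"
proof -
  have "(x' has_integral (x t - x 0)) {0..t}"
    using t by (intro fundamental_theorem_of_calculus)
      (auto intro: has_vector_derivative_within_subset[OF x_deriv])
  moreover have "((\<lambda>s. B * s) has_integral B * t^2 / 2) {0..t}"
    using has_integral_mult_right[OF ident_has_integral[OF t], of B] by simp
  ultimately show ?thesis
    using B by (metis has_integral_norm_bound_integral_component inner_real_def mult_1_right)
qed

lemma forcing_le:
  assumes r: "r \<ge> 0" and B: "\<And>s. s \<in> {0..r} \<Longrightarrow> norm (x' s) \<le> B * s"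
  shows "norm (forcing r) \<le> \<beta> * L * B * r + L * B * r^2 / 2"
proof -
  have "norm (forcing r) \<le> norm (\<beta> *\<^sub>R blinfun_apply (Hs (x r)) (x' r)) + norm (g (x r) - g (x 0))"
    unfolding forcing_def by (metis add_diff_eq norm_triangle_ineq)
  also have "\<dots> \<le> \<beta> * (L * norm (x' r)) + L * norm (x r - x 0)"
    using hessian_norm_le[of "x r" "x' r"] lipschitz_onD[OF lipschitz, of "x r" "x 0"] beta_nonneg
    by (intro add_mono) (auto intro: mult_left_mono simp: dist_norm)
  also have "\<dots> \<le> \<beta> * (L * (B * r)) + L * (B * r^2 / 2)"
    using B r displacement_le[OF r B] beta_nonneg lipschitz_const_nonneg
    by (intro add_mono mult_left_mono) auto
  finally show ?thesis
    by (simp add: mult_ac)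
qed

lemma velocity_deviation_le_linear:
  assumes t: "t > 0" and B: "\<And>s. s \<in> {0..t} \<Longrightarrow> norm (x' s) \<le> B * s"
  shows "norm (x' t + (t / (\<alpha> + 1)) *\<^sub>R g (x 0)) \<le> B * (1 - H_fun \<alpha> \<beta> L t) * t"
proof -
  define F where "F r = \<beta> * L * B * r powr (\<alpha> + 1) + L * B / 2 * r powr (\<alpha> + 2)" for r
  have "(F has_integral \<beta> * L * B * (t powr (\<alpha> + 2) / (\<alpha> + 2))
      + L * B / 2 * (t powr (\<alpha> + 3) / (\<alpha> + 3))) {0..t}"
    unfolding F_def using t alpha_pos has_integral_powr_from_0[of "\<alpha> + 1" t]
      has_integral_powr_from_0[of "\<alpha> + 2" t]
    by (intro has_integral_add has_integral_mult_right) (auto simp: add.assoc)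
  moreover have "r powr \<alpha> * norm (forcing r) \<le> F r" if r: "r \<in> {0..t}" for r
  proof -
    have "r powr \<alpha> * norm (forcing r) \<le> r powr \<alpha> * (\<beta> * L * B * r + L * B * r^2 / 2)"
      using forcing_le[of r B] B r by (intro mult_left_mono) auto
    also have "\<dots> = F r"
      using r by (simp add: F_def powr_add algebra_simps)
    finally show ?thesis .
  qed
  ultimately have "t powr \<alpha> * norm (x' t + (t / (\<alpha> + 1)) *\<^sub>R g (x 0))
      \<le> \<beta> * L * B * (t powr (\<alpha> + 2) / (\<alpha> + 2)) + L * B / 2 * (t powr (\<alpha> + 3) / (\<alpha> + 3))"
    by (rule velocity_deviation_le[OF t])
  also have "\<dots> = t powr \<alpha> * (B * (1 - H_fun \<alpha> \<beta> L t) * t)"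
    using t by (simp add: H_fun_def powr_add power2_eq_square power3_eq_cube field_simps)
  finally show ?thesis
    by (rule mult_left_le_imp_le) (use t in simp)
qed

text \<open>The least \<open>B\<close> with \<open>norm (x' s) \<le> B * s\<close> on \<open>[0, \<tau>]\<close> reproduces itself up to the factor
  \<open>1 - H\<close> and an additive \<open>norm (g (x 0)) / (\<alpha> + 1)\<close>.\<close>
lemma velocity_linear_bound:
  assumes \<tau>: "\<tau> > 0"
  obtains B where "0 \<le> B" "B * H_fun \<alpha> \<beta> L \<tau> \<le> norm (g (x 0)) / (\<alpha> + 1)"
    "\<And>s. s \<in> {0..\<tau>} \<Longrightarrow> norm (x' s) \<le> B * s"
proof
  define c where "c = norm (g (x 0)) / (\<alpha> + 1)"
  define B where "B = (SUP s\<in>{0<..\<tau>}. norm (x' s) / s)"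
  have quotient_le_B: "norm (x' s) / s \<le> B" if "s \<in> {0<..\<tau>}" for s
    unfolding B_def using that velocity_quotient_bdd_above by (rule cSUP_upper)
  show "0 \<le> B"
    using quotient_le_B[of \<tau>] \<tau> by (auto intro: order_trans[rotated])
  show linear: "norm (x' s) \<le> B * s" if "s \<in> {0..\<tau>}" for s
    using quotient_le_B[of s] that starts_at_rest
    by (cases "s = 0") (auto simp: divide_le_eq mult.commute)
  have "norm (x' s) / s \<le> c + B * (1 - H_fun \<alpha> \<beta> L \<tau>)" if s: "s \<in> {0<..\<tau>}" for s
  proof -
    have "norm (x' s + (s / (\<alpha> + 1)) *\<^sub>R g (x 0)) \<le> B * (1 - H_fun \<alpha> \<beta> L s) * s"
      using s linear by (intro velocity_deviation_le_linear) auto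
    also have "\<dots> \<le> B * (1 - H_fun \<alpha> \<beta> L \<tau>) * s"
      using s \<open>0 \<le> B\<close> beta_nonneg lipschitz_const_nonneg alpha_pos
      by (intro mult_right_mono mult_left_mono diff_left_mono H_fun_antimono) auto
    finally have "norm (x' s) \<le> (c + B * (1 - H_fun \<alpha> \<beta> L \<tau>)) * s"
      using norm_triangle_ineq4[of "x' s + (s / (\<alpha> + 1)) *\<^sub>R g (x 0)" "(s / (\<alpha> + 1)) *\<^sub>R g (x 0)"]
        s alpha_pos by (simp add: c_def algebra_simps)
    then show ?thesis
      using s by (simp add: divide_le_eq)
  qed
  then have "B \<le> c + B * (1 - H_fun \<alpha> \<beta> L \<tau>)"
    unfolding B_def using \<tau> by (intro cSUP_least) auto
  then show "B * H_fun \<alpha> \<beta> L \<tau> \<le> norm (g (x 0)) / (\<alpha> + 1)"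
    unfolding c_def by (simp add: algebra_simps)
qed

lemma velocity_lower_bound:
  assumes \<tau>: "\<tau> > 0" and H: "H_fun \<alpha> \<beta> L \<tau> > 1/2"
  shows "\<tau> * (norm (g (x 0)) / (\<alpha> + 1)) * (2 * H_fun \<alpha> \<beta> L \<tau> - 1) / H_fun \<alpha> \<beta> L \<tau>
    \<le> norm (x' \<tau>)"
proof -
  define c where "c = norm (g (x 0)) / (\<alpha> + 1)"
  define H where "H = H_fun \<alpha> \<beta> L \<tau>"
  obtain B where "0 \<le> B" "B * H \<le> c" and linear: "\<And>s. s \<in> {0..\<tau>} \<Longrightarrow> norm (x' s) \<le> B * s"
    unfolding c_def H_def using velocity_linear_bound[OF \<tau>] by blast
  have "H \<le> 1"
    unfolding H_def using beta_nonneg lipschitz_const_nonneg alpha_pos \<tau> by (intro H_fun_le_one) auto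
  with \<open>B * H \<le> c\<close> H have B_le: "B * (1 - H) \<le> c / H * (1 - H)"
    unfolding H_def by (intro mult_right_mono) (auto simp: field_simps)
  have "\<tau> * c \<le> norm (x' \<tau> + (\<tau> / (\<alpha> + 1)) *\<^sub>R g (x 0)) + norm (x' \<tau>)"
    using norm_triangle_ineq4[of "x' \<tau> + (\<tau> / (\<alpha> + 1)) *\<^sub>R g (x 0)" "x' \<tau>"] \<tau> alpha_pos
    by (simp add: c_def)
  also have "\<dots> \<le> B * (1 - H) * \<tau> + norm (x' \<tau>)"
    unfolding H_def using \<tau> linear by (intro add_right_mono velocity_deviation_le_linear) auto
  also have "\<dots> \<le> \<tau> * (c / H * (1 - H)) + norm (x' \<tau>)"
    using mult_left_mono[OF B_le, of \<tau>] \<tau> by (simp add: mult_ac)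
  finally show ?thesis
    using H unfolding c_def[symmetric] H_def[symmetric] by (simp add: field_simps)
qed

lemma speed_sq_has_derivative:
  assumes "t > 0"
  shows "((\<lambda>s. (norm (x' s))^2) has_real_derivative 2 * (x'' t \<bullet> x' t)) (at t)"
  using x'_deriv[OF assms] unfolding has_vector_derivative_def has_field_derivative_def power2_norm_eq_inner
  by (auto intro!: derivative_eq_intros simp: fun_eq_iff inner_commute algebra_simps)

lemma varphi_eq:
  "t > 0 \<Longrightarrow> varphi \<alpha> lam x' t = x'' t \<bullet> x' t + lam * \<alpha> / t * (norm (x' t))^2"
  unfolding varphi_def using DERIV_imp_deriv[OF speed_sq_has_derivative] by simp

lemma weighted_speed_mono:
  assumes "0 < a" "a \<le> b" and varphi_nonneg: "\<And>t. t \<in> {a..b} \<Longrightarrow> varphi \<alpha> lam x' t \<ge> 0"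
  shows "a powr (2 * \<alpha> * lam) * (norm (x' a))^2 \<le> b powr (2 * \<alpha> * lam) * (norm (x' b))^2"
proof (rule DERIV_nonneg_imp_nondecreasing[OF \<open>a \<le> b\<close>])
  fix t assume t: "a \<le> t" "t \<le> b"
  then have "t > 0" using \<open>0 < a\<close> by simp
  define p where "p = 2 * \<alpha> * lam"
  have "((\<lambda>s. s powr p * (norm (x' s))^2) has_real_derivative
      p * t powr (p - 1) * (norm (x' t))^2 + 2 * (x'' t \<bullet> x' t) * t powr p) (at t)"
    by (rule DERIV_mult[OF has_real_derivative_powr[OF \<open>t > 0\<close>] speed_sq_has_derivative[OF \<open>t > 0\<close>]])
  moreover have "p * t powr (p - 1) * (norm (x' t))^2 + 2 * (x'' t \<bullet> x' t) * t powr p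
      = 2 * t powr p * varphi \<alpha> lam x' t"
    unfolding varphi_eq[OF \<open>t > 0\<close>] p_def using \<open>t > 0\<close> by (simp add: powr_diff algebra_simps)
  ultimately have "((\<lambda>s. s powr (2 * \<alpha> * lam) * (norm (x' s))^2) has_real_derivative
      2 * t powr (2 * \<alpha> * lam) * varphi \<alpha> lam x' t) (at t)"
    unfolding p_def by simp
  moreover have "0 \<le> 2 * t powr (2 * \<alpha> * lam) * varphi \<alpha> lam x' t"
    using varphi_nonneg t by simp
  ultimately show "\<exists>y. ((\<lambda>s. s powr (2 * \<alpha> * lam) * (norm (x' s))^2) has_real_derivative y) (at t) \<and> 0 \<le> y"
    by blast
qed

end

locale strongly_convex_hessian_damped_flow = hessian_damped_flow +
  fixes \<phi> :: "'a \<Rightarrow> real" and \<mu> :: real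
  assumes gradient: "\<And>y. (\<phi> has_derivative (\<lambda>h. g y \<bullet> h)) (at y)"
    and mu_pos: "\<mu> > 0" and strongly_convex: "strongly_convex \<mu> \<phi>"
begin

lemma hessian_coercive: "\<mu> * (norm v)^2 \<le> blinfun_apply (Hs y) v \<bullet> v"
  by (rule strongly_convex_derivative_coercive[OF gradient strongly_convex hessian])

lemma energy_dissipation:
  assumes t: "t > 0" and varphi_nonneg: "varphi \<alpha> lam x' t \<ge> 0"
  shows "((1 - lam) * \<alpha> / t + \<beta> * \<mu>) * (norm (x' t))^2 \<le> - (g (x t) \<bullet> x' t)"
proof -
  have "x'' t \<bullet> x' t = - (\<alpha> / t * (norm (x' t))^2) - \<beta> * (blinfun_apply (Hs (x t)) (x' t) \<bullet> x' t)
      - g (x t) \<bullet> x' t"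
    unfolding acceleration_eq[OF t] by (simp add: inner_diff_left power2_norm_eq_inner)
  moreover have "\<beta> * (\<mu> * (norm (x' t))^2) \<le> \<beta> * (blinfun_apply (Hs (x t)) (x' t) \<bullet> x' t)"
    using hessian_coercive beta_nonneg by (rule mult_left_mono)
  ultimately show ?thesis
    using varphi_nonneg unfolding varphi_eq[OF t] by (simp add: algebra_simps diff_divide_distrib)
qed

lemma value_has_integral:
  assumes "0 \<le> a" "a \<le> b"
  shows "((\<lambda>s. g (x s) \<bullet> x' s) has_integral \<phi> (x b) - \<phi> (x a)) {a..b}"
proof (rule fundamental_theorem_of_calculus[OF \<open>a \<le> b\<close>])
  fix s assume "s \<in> {a..b}"
  then have "(x has_vector_derivative x' s) (at s within {a..b})"
    using assms by (auto intro: has_vector_derivative_within_subset[OF x_deriv])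
  from has_derivative_compose[OF this[unfolded has_vector_derivative_def] gradient]
  show "((\<lambda>s. \<phi> (x s)) has_vector_derivative g (x s) \<bullet> x' s) (at s within {a..b})"
    unfolding has_vector_derivative_def by (simp add: algebra_simps)
qed

lemma value_le_initial:
  assumes "lam \<le> 1" "0 \<le> t" and varphi_nonneg: "\<And>s. s \<in> {0<..t} \<Longrightarrow> varphi \<alpha> lam x' s \<ge> 0"
  shows "\<phi> (x t) \<le> \<phi> (x 0)"
proof -
  have "g (x s) \<bullet> x' s \<le> 0" if s: "s \<in> {0..t}" for s
  proof (cases "s = 0")
    case False
    then have "s > 0" using s by simp
    have "0 \<le> ((1 - lam) * \<alpha> / s + \<beta> * \<mu>) * (norm (x' s))^2"
      using assms \<open>s > 0\<close> alpha_pos beta_nonneg mu_pos by simp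
    then show ?thesis
      using energy_dissipation[OF \<open>s > 0\<close> varphi_nonneg] s \<open>s > 0\<close> by fastforce
  qed (simp add: starts_at_rest)
  then have "\<phi> (x t) - \<phi> (x 0) \<le> 0"
    using has_integral_le[OF value_has_integral[OF order_refl \<open>0 \<le> t\<close>] has_integral_0] by auto
  then show ?thesis by simp
qed

lemma dissipation_integral_le:
  assumes lam: "0 \<le> lam" "lam \<le> 1" and \<tau>: "0 < \<tau>" "\<tau> \<le> t"
    and varphi_nonneg: "\<And>s. s \<in> {0<..t} \<Longrightarrow> varphi \<alpha> lam x' s \<ge> 0"
  shows "\<tau> powr (2 * \<alpha> * lam) * (norm (x' \<tau>))^2 * integral {\<tau>..t}
      (\<lambda>s. \<alpha> * (1 - lam) / s powr (2 * \<alpha> * lam + 1) + \<beta> * \<mu> / s powr (2 * \<alpha> * lam))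
    \<le> \<phi> (x 0) - \<phi> (x t)"
proof -
  define p where "p = 2 * \<alpha> * lam"
  define h where "h s = \<alpha> * (1 - lam) / s powr (p + 1) + \<beta> * \<mu> / s powr p" for s
  define P where "P = \<tau> powr p * (norm (x' \<tau>))^2"
  have "continuous_on {\<tau>..t} h"
    unfolding h_def using \<tau> by (intro continuous_intros) auto
  then have h_int: "(h has_integral integral {\<tau>..t} h) {\<tau>..t}"
    by (intro integrable_integral integrable_continuous_interval)
  have "P * h s \<le> - (g (x s) \<bullet> x' s)" if s: "s \<in> {\<tau>..t}" for s
  proof -
    have "s > 0" using s \<tau> by simp
    have "P \<le> s powr p * (norm (x' s))^2"
      unfolding P_def p_def using s \<tau> varphi_nonneg by (intro weighted_speed_mono) auto
    moreover have "0 \<le> h s"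
      unfolding h_def using \<open>s > 0\<close> lam alpha_pos beta_nonneg mu_pos by simp
    ultimately have "P * h s \<le> s powr p * (norm (x' s))^2 * h s"
      by (rule mult_right_mono)
    also have "\<dots> = ((1 - lam) * \<alpha> / s + \<beta> * \<mu>) * (norm (x' s))^2"
      unfolding h_def using \<open>s > 0\<close> by (simp add: powr_add field_simps)
    also have "\<dots> \<le> - (g (x s) \<bullet> x' s)"
      using s \<tau> varphi_nonneg by (intro energy_dissipation) auto
    finally show ?thesis .
  qed
  then have "P * integral {\<tau>..t} h \<le> - (\<phi> (x t) - \<phi> (x \<tau>))"
    using \<tau> by (intro has_integral_le[OF has_integral_mult_right[OF h_int]
        has_integral_neg[OF value_has_integral]]) auto
  moreover have "\<phi> (x \<tau>) \<le> \<phi> (x 0)"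
    using lam \<tau> varphi_nonneg by (intro value_le_initial) auto
  ultimately show ?thesis
    unfolding P_def h_def p_def by simp
qed

lemma dissipation_integral_bound:
  assumes lam: "0 \<le> lam" "lam \<le> 1" and \<tau>: "0 < \<tau>" "\<tau> \<le> t"
    and varphi_nonneg: "\<And>s. s \<in> {0<..t} \<Longrightarrow> varphi \<alpha> lam x' s \<ge> 0"
    and H: "H_fun \<alpha> \<beta> L \<tau> > 1/2" and not_critical: "g (x 0) \<noteq> 0"
  shows "integral {\<tau>..t}
      (\<lambda>s. \<alpha> * (1 - lam) / s powr (2 * \<alpha> * lam + 1) + \<beta> * \<mu> / s powr (2 * \<alpha> * lam))
    \<le> (\<alpha> + 1)^2 * (H_fun \<alpha> \<beta> L \<tau>)^2
      / (2 * \<mu> * \<tau> powr (2 * \<alpha> * lam + 2) * (2 * H_fun \<alpha> \<beta> L \<tau> - 1)^2)"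
    (is "?I \<le> _")
proof -
  define p where "p = 2 * \<alpha> * lam"
  define G where "G = norm (g (x 0))"
  define H\<tau> where "H\<tau> = H_fun \<alpha> \<beta> L \<tau>"
  define V where "V = \<tau> * (G / (\<alpha> + 1)) * (2 * H\<tau> - 1) / H\<tau>"
  have "G > 0" "V > 0"
    using not_critical H \<tau> alpha_pos by (auto simp: G_def V_def H\<tau>_def)
  have "V \<le> norm (x' \<tau>)"
    unfolding V_def G_def H\<tau>_def using \<tau>(1) H by (rule velocity_lower_bound)
  then have P: "\<tau> powr p * V^2 \<le> \<tau> powr p * (norm (x' \<tau>))^2"
    using \<open>V > 0\<close> by (intro mult_left_mono power_mono) auto
  have P_pos: "0 < \<tau> powr p * (norm (x' \<tau>))^2"
    using \<open>V > 0\<close> \<tau> by (intro less_le_trans[OF _ P]) simp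
  have "\<tau> powr p * (norm (x' \<tau>))^2 * ?I \<le> \<phi> (x 0) - \<phi> (x t)"
    unfolding p_def using lam \<tau> varphi_nonneg by (rule dissipation_integral_le)
  also have "\<dots> \<le> G^2 / (2 * \<mu>)"
    unfolding G_def by (rule strongly_convex_suboptimality_le[OF gradient strongly_convex mu_pos])
  finally have "?I \<le> G^2 / (2 * \<mu>) / (\<tau> powr p * (norm (x' \<tau>))^2)"
    by (subst pos_le_divide_eq[OF P_pos]) (simp add: mult.commute)
  also have "\<dots> \<le> G^2 / (2 * \<mu>) / (\<tau> powr p * V^2)"
    using P P_pos \<open>V > 0\<close> \<tau> mu_pos by (intro divide_left_mono mult_pos_pos) auto
  also have "\<dots> = (\<alpha> + 1)^2 * H\<tau>^2 / (2 * \<mu> * \<tau> powr (p + 2) * (2 * H\<tau> - 1)^2)"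
    using \<open>G > 0\<close> H \<tau> alpha_pos mu_pos
    by (simp add: V_def H\<tau>_def powr_add power_mult_distrib power_divide field_simps)
      (simp add: power2_eq_square algebra_simps)
  finally show ?thesis
    unfolding p_def H\<tau>_def .
qed

end

theorem mainTheorem9:
  fixes \<phi> :: "'a::euclidean_space \<Rightarrow> real"
    and g :: "'a \<Rightarrow> 'a"
    and Hs :: "'a \<Rightarrow> 'a \<Rightarrow>\<^sub>L 'a"
    and x x' x'' :: "real \<Rightarrow> 'a"
    and z :: 'a
    and \<mu> L \<alpha> \<beta> lam \<tau> :: real
  assumes grad: "\<And>y. (\<phi> has_derivative (\<lambda>h. g y \<bullet> h)) (at y)"
    and hess: "\<And>y. (g has_derivative blinfun_apply (Hs y)) (at y)"
    and hess_cont: "continuous_on UNIV Hs"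
    and mu_pos: "\<mu> > 0"
    and sconv: "strongly_convex \<mu> \<phi>"
    and lip: "L-lipschitz_on UNIV g"
    and alpha_pos: "\<alpha> > 0" and beta_nonneg: "\<beta> \<ge> 0"
    and lam_range: "0 \<le> lam" "lam \<le> 1"
    and x_deriv: "\<And>t. t \<ge> 0 \<Longrightarrow> (x has_vector_derivative x' t) (at t within {0..})"
    and x'_cont: "continuous_on {0..} x'"
    and x'_deriv: "\<And>t. t > 0 \<Longrightarrow> (x' has_vector_derivative x'' t) (at t)"
    and x''_cont: "continuous_on {0<..} x''"
    and ode: "\<And>t. t > 0 \<Longrightarrow>
               x'' t + (\<alpha> / t) *\<^sub>R x' t + \<beta> *\<^sub>R blinfun_apply (Hs (x t)) (x' t) + g (x t) = 0"
    and init: "x 0 = z" "x' 0 = 0"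
    and not_min: "\<exists>y. \<phi> y < \<phi> z"
    and tau: "0 < \<tau>" "\<tau> < tau2 \<alpha> \<beta> L" "ereal \<tau> < T_lam \<alpha> lam x'"
  shows "(\<integral>\<^sup>+ t \<in> {t. \<tau> \<le> t \<and> ereal t < T_lam \<alpha> lam x'}.
            ennreal (\<alpha> * (1 - lam) / t powr (2 * \<alpha> * lam + 1)) \<partial>lborel)
       + (\<integral>\<^sup>+ t \<in> {t. \<tau> \<le> t \<and> ereal t < T_lam \<alpha> lam x'}.
            ennreal (\<beta> * \<mu> / t powr (2 * \<alpha> * lam)) \<partial>lborel)
       \<le> ennreal ((\<alpha> + 1)^2 * (H_fun \<alpha> \<beta> L \<tau>)^2
            / (2 * \<mu> * \<tau> powr (2 * \<alpha> * lam + 2) * (2 * H_fun \<alpha> \<beta> L \<tau> - 1)^2))"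
proof -
  interpret strongly_convex_hessian_damped_flow g Hs x x' x'' \<alpha> \<beta> L \<phi> \<mu>
    using assms by unfold_locales auto
  define S where "S = {t. \<tau> \<le> t \<and> ereal t < T_lam \<alpha> lam x'}"
  define h where "h = (\<lambda>t. \<alpha> * (1 - lam) / t powr (2 * \<alpha> * lam + 1) + \<beta> * \<mu> / t powr (2 * \<alpha> * lam))"
  define C where "C = (\<alpha> + 1)^2 * (H_fun \<alpha> \<beta> L \<tau>)^2
    / (2 * \<mu> * \<tau> powr (2 * \<alpha> * lam + 2) * (2 * H_fun \<alpha> \<beta> L \<tau> - 1)^2)"
  have nonneg: "0 \<le> \<alpha> * (1 - lam) / t powr (2 * \<alpha> * lam + 1)" "0 \<le> \<beta> * \<mu> / t powr (2 * \<alpha> * lam)"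
    for t using alpha_pos lam_range beta_nonneg mu_pos by auto
  have H: "H_fun \<alpha> \<beta> L \<tau> > 1/2"
    using beta_nonneg lipschitz_const_nonneg alpha_pos tau by (intro H_fun_gt_half) auto
  have not_critical: "g (x 0) \<noteq> 0"
    using not_min init strongly_convex_gradient_nonzero[OF grad sconv mu_pos] by blast
  have "integral {\<tau>..t} h \<le> C" if "\<tau> \<le> t" "ereal t < T_lam \<alpha> lam x'" for t
    unfolding h_def C_def
  proof (rule dissipation_integral_bound[OF lam_range tau(1) that(1) _ H not_critical])
    fix s assume "s \<in> {0<..t}"
    then show "varphi \<alpha> lam x' s \<ge> 0"
      using varphi_pos_below_T_lam[of s \<alpha> lam x'] le_less_trans[OF _ that(2), of "ereal s"] by fastforce
  qed
  then have "(\<integral>\<^sup>+ t \<in> S. ennreal (h t) \<partial>lborel) \<le> ennreal C"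
    unfolding S_def using tau(1,3) nonneg
    by (intro set_nn_integral_le_of_interval_integrals_le) (auto simp: h_def intro!: continuous_intros)
  moreover have "(\<integral>\<^sup>+ t \<in> S. ennreal (h t) \<partial>lborel)
      = (\<integral>\<^sup>+ t \<in> S. ennreal (\<alpha> * (1 - lam) / t powr (2 * \<alpha> * lam + 1)) \<partial>lborel)
      + (\<integral>\<^sup>+ t \<in> S. ennreal (\<beta> * \<mu> / t powr (2 * \<alpha> * lam)) \<partial>lborel)"
    unfolding h_def S_def using nonneg
    by (subst nn_integral_add[symmetric]) (auto simp: ennreal_plus distrib_right intro!: nn_integral_cong)
  ultimately show ?thesis
    unfolding S_def C_def by simp
qed

end
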